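(* Let $P$ be an orthogonal polygon with $n$ corners. Then $P$ can be divided into at most $\frac{3}{4}n-2$ rectangular pieces by adding only vertical line segments to the interior of $P$. If $P$ is a polyomino, the rectangular pieces can be chosen to be polyominos as well.
   Context: An orthogonal polygon is a polygonal region, possibly with holes, all of whose edges are axis-parallel. A cell is a unit square $[i,i+1]\times[j,j+1]$ with $i,j\in\mathbb{Z}$. A polyomino is a finite union of cells. *)

theory Defs
  imports "HOL-Analysis.Analysis"
begin

definition is_rectangle :: "(real \<times> real) set \<Rightarrow> bool" where
  "is_rectangle R \<longleftrightarrow> (\<exists>a b c d. a < c \<and> b < d \<and> R = cbox (a, b) (c, d))"

definition cell :: "int \<Rightarrow> int \<Rightarrow> (real \<times> real) set" where
  "cell i j = cbox (of_int i, of_int j) (of_int i + 1, of_int j + 1)"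

definition is_polyomino :: "(real \<times> real) set \<Rightarrow> bool" where
  "is_polyomino P \<longleftrightarrow> (\<exists>C :: (int \<times> int) set. finite C \<and> P = (\<Union>(i, j)\<in>C. cell i j))"

definition quadrant_in :: "(real \<times> real) set \<Rightarrow> real \<times> real \<Rightarrow> real \<Rightarrow> real \<Rightarrow> bool" where
  "quadrant_in P p s t \<longleftrightarrow> (\<exists>e>0. \<forall>u v. 0 < s * (u - fst p) \<and> s * (u - fst p) < e \<and>
       0 < t * (v - snd p) \<and> t * (v - snd p) < e \<longrightarrow> (u, v) \<in> P)"

definition signs :: "(real \<times> real) set" where
  "signs = {-1, 1} \<times> {-1, 1}"

definition quadrants_in :: "(real \<times> real) set \<Rightarrow> real \<times> real \<Rightarrow> (real \<times> real) set" where
  "quadrants_in P p = {(s, t) \<in> signs. quadrant_in P p s t}"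

text \<open>A corner: the boundary turns by 90 degrees, i.e. locally P occupies exactly one or three quadrants.\<close>
definition corners :: "(real \<times> real) set \<Rightarrow> (real \<times> real) set" where
  "corners P = {p. card (quadrants_in P p) = 1 \<or> card (quadrants_in P p) = 3}"

text \<open>Orthogonal polygon (possibly with holes): a finite union of nondegenerate axis-parallel
  rectangles with connected nonempty interior whose boundary has no pinch points
  (locally exactly two diagonally opposite quadrants), so that the boundary consists of
  disjoint simple closed axis-parallel polygonal curves.\<close>
definition orthogonal_polygon :: "(real \<times> real) set \<Rightarrow> bool" where
  "orthogonal_polygon P \<longleftrightarrow>
     (\<exists>\<R>. finite \<R> \<and> \<R> \<noteq> {} \<and> (\<forall>R\<in>\<R>. is_rectangle R) \<and> P = \<Union>\<R>) \<and>
     connected (interior P) \<and>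
     (\<forall>p. quadrants_in P p \<noteq> {(1, 1), (-1, -1)} \<and> quadrants_in P p \<noteq> {(1, -1), (-1, 1)})"

definition vseg :: "real \<Rightarrow> real \<Rightarrow> real \<Rightarrow> (real \<times> real) set" where
  "vseg x a b = {(x, y) | y. a \<le> y \<and> y \<le> b}"

definition pieces :: "(real \<times> real) set \<Rightarrow> (real \<times> real \<times> real) set \<Rightarrow> (real \<times> real) set set" where
  "pieces P S = closure ` components (interior P - (\<Union>(x, a, b)\<in>S. vseg x a b))"

definition vertical_division :: "(real \<times> real) set \<Rightarrow> (real \<times> real \<times> real) set \<Rightarrow> bool" where
  "vertical_division P S \<longleftrightarrow> finite S \<and> (\<forall>(x, a, b)\<in>S. a < b \<and> vseg x a b \<subseteq> P) \<and>
     finite (pieces P S) \<and> (\<forall>R\<in>pieces P S. is_rectangle R)"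

end

theory Submission
  imports Defs
begin

text \<open>Cover P by finitely many rectangles and refine them to the grid spanned by their
  coordinates. Among the tilings of P by rectangles that are single grid columns, one with fewest
  tiles has all horizontal tile sides on the boundary of P, since two tiles stacked in a column
  could be merged; among the tilings with this property, one with fewest tiles has no two tiles of
  equal height side by side. Cutting P along the vertical sides of such a tiling F yields exactly
  its tiles.

  To count them, look at the 4 |F| tile vertices. A corner of P is a vertex of at most one tile and
  any other point of at most two. A vertex that is not a corner of P is shared by two neighbouring
  tiles of different heights, and the far end of the shorter one is a reflex corner of P which
  determines the vertex. Since at least four corners of P are convex,
  4 |F| \<le> n + 2 (n - 4).\<close>

section \<open>Rectangles given by their coordinates\<close>

type_synonym rcoords = "real \<times> real \<times> real \<times> real"

fun rect :: "rcoords \<Rightarrow> (real \<times> real) set" where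
  "rect (a, b, c, d) = cbox (a, b) (c, d)"

fun open_rect :: "rcoords \<Rightarrow> (real \<times> real) set" where
  "open_rect (a, b, c, d) = box (a, b) (c, d)"

fun proper :: "rcoords \<Rightarrow> bool" where
  "proper (a, b, c, d) \<longleftrightarrow> a < c \<and> b < d"

fun overlap :: "rcoords \<Rightarrow> rcoords \<Rightarrow> bool" where
  "overlap (a, b, c, d) (a', b', c', d') \<longleftrightarrow> a < c' \<and> a' < c \<and> b < d' \<and> b' < d"

fun covers_quadrant :: "rcoords \<Rightarrow> real \<times> real \<Rightarrow> real \<Rightarrow> real \<Rightarrow> bool" where
  "covers_quadrant (a, b, c, d) (x, y) s t \<longleftrightarrow> a \<le> x \<and> x \<le> c \<and> b \<le> y \<and> y \<le> d \<and>
     (if s = 1 then x < c else a < x) \<and> (if t = 1 then y < d else b < y)"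

fun vertex :: "rcoords \<Rightarrow> real \<Rightarrow> real \<Rightarrow> real \<times> real" where
  "vertex (a, b, c, d) s t = (if s = 1 then a else c, if t = 1 then b else d)"

lemma mem_rect: "(x, y) \<in> rect (a, b, c, d) \<longleftrightarrow> a \<le> x \<and> x \<le> c \<and> b \<le> y \<and> y \<le> d"
  by auto

lemma mem_box_pair:
  "((x::real), (y::real)) \<in> box (a, b) (c, d) \<longleftrightarrow> a < x \<and> x < c \<and> b < y \<and> y < d"
  by (auto simp: mem_box Basis_prod_def ball_Un inner_Pair Basis_real_def)

lemma mem_signs: "(s, t) \<in> signs \<longleftrightarrow> s \<in> {-1, 1} \<and> t \<in> {-1, 1}"
  unfolding signs_def by auto

lemma finite_signs: "finite signs"
  unfolding signs_def by simp

lemma card_signs: "card signs = 4"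
  unfolding signs_def by (simp add: card_cartesian_product)

lemma quadrants_in_subset_signs: "quadrants_in P p \<subseteq> signs"
  unfolding quadrants_in_def by auto

lemma finite_quadrants_in: "finite (quadrants_in P p)"
  using quadrants_in_subset_signs finite_signs finite_subset by blast

lemma covers_quadrant_vertex:
  "proper M \<Longrightarrow> s \<in> {-1, 1} \<Longrightarrow> t \<in> {-1, 1} \<Longrightarrow> covers_quadrant M (vertex M s t) s t"
  by (cases M) auto

lemma covers_quadrant_overlap:
  "covers_quadrant M p s t \<Longrightarrow> covers_quadrant N p s t \<Longrightarrow> s \<in> {-1, 1} \<Longrightarrow> t \<in> {-1, 1} \<Longrightarrow>
   overlap M N"
  by (cases M; cases N; cases p) (auto split: if_splits)

lemma overlap_sym: "overlap M N \<Longrightarrow> overlap N M"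
  by (cases M; cases N) auto

lemma rect_inj:
  assumes "proper M" "proper N" "rect M = rect N"
  shows "M = N"
proof (cases M, cases N)
  fix a b c d a' b' c' d' assume MN: "M = (a, b, c, d)" "N = (a', b', c', d')"
  then have "(a, b) \<in> rect N" "(c, d) \<in> rect N" "(a', b') \<in> rect M" "(c', d') \<in> rect M"
    using assms MN by (metis mem_rect order.refl less_imp_le proper.simps)+
  then show ?thesis using MN by (auto simp del: rect.simps simp: mem_rect)
qed

lemma is_rectangle_rect: "proper M \<Longrightarrow> is_rectangle (rect M)"
  by (cases M) (auto simp: is_rectangle_def)

lemma closure_open_rect: "proper M \<Longrightarrow> closure (open_rect M) = rect M"
  by (cases M) (auto simp: box_eq_empty Basis_prod_def inner_Pair Basis_real_def)

lemma rect_nonempty: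
  assumes "proper M"
  shows "rect M \<noteq> {}"
proof -
  obtain a b c d where "M = (a, b, c, d)" by (cases M)
  then have "(a, b) \<in> rect M" using assms by auto
  then show ?thesis by blast
qed

lemma open_rect_nonempty: "proper M \<Longrightarrow> open_rect M \<noteq> {}"
  by (cases M) (auto simp: box_eq_empty Basis_prod_def inner_Pair Basis_real_def)

lemma interior_rect: "interior (rect M) = open_rect M"
  by (cases M) simp

lemma interior_imp_quadrant_in:
  assumes "p \<in> interior P" "s \<in> {-1, 1}" "t \<in> {-1, 1}"
  shows "quadrant_in P p s t"
proof -
  obtain e where e: "e > 0" "ball p e \<subseteq> P"
    using assms by (meson mem_interior)
  have "(u, v) \<in> P" if "0 < s * (u - fst p)" "s * (u - fst p) < e / 2"
    "0 < t * (v - snd p)" "t * (v - snd p) < e / 2" for u v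
  proof -
    have "dist p (u, v) \<le> \<bar>u - fst p\<bar> + \<bar>v - snd p\<bar>"
      using dist_Pair_Pair[of "fst p" "snd p" u v] sqrt_sum_squares_le_sum_abs
      by (simp add: dist_real_def abs_minus_commute)
    also have "\<dots> < e"
      using that assms(2,3) by auto
    finally show ?thesis using e(2) by auto
  qed
  then show ?thesis
    unfolding quadrant_in_def using e(1) half_gt_zero by blast
qed

lemma quadrant_in_if_covers_quadrant:
  assumes M: "covers_quadrant M p s t" "rect M \<subseteq> P" and s: "s \<in> {-1, 1}" and t: "t \<in> {-1, 1}"
  shows "quadrant_in P p s t"
proof -
  obtain a b c d x y where Md: "M = (a, b, c, d)" and p: "p = (x, y)"
    by (cases M; cases p)
  define e where "e = min (if s = 1 then c - x else x - a) (if t = 1 then d - y else y - b)"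
  have "e > 0" using M(1) s t unfolding Md p e_def by auto
  moreover have "(u, v) \<in> P"
    if "0 < s * (u - x)" "s * (u - x) < e" "0 < t * (v - y)" "t * (v - y) < e" for u v
  proof -
    have "(u, v) \<in> rect M"
      using that M(1) s t unfolding Md p e_def by (auto split: if_splits)
    then show ?thesis using M(2) by blast
  qed
  ultimately show ?thesis
    unfolding quadrant_in_def p by auto
qed

lemma quadrant_in_Union_rect_iff:
  assumes fin: "finite F" and s: "s \<in> {-1, 1}" and t: "t \<in> {-1, 1}"
  shows "quadrant_in (\<Union>(rect ` F)) p s t \<longleftrightarrow> (\<exists>M\<in>F. covers_quadrant M p s t)"
proof
  obtain x y where p: "p = (x, y)" by (cases p)
  assume "quadrant_in (\<Union>(rect ` F)) p s t"
  then obtain e where e: "e > 0" and eP: "\<And>u v. 0 < s * (u - x) \<Longrightarrow> s * (u - x) < e \<Longrightarrow>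
       0 < t * (v - y) \<Longrightarrow> t * (v - y) < e \<Longrightarrow> (u, v) \<in> \<Union>(rect ` F)"
    unfolding quadrant_in_def p by auto
  \<comment> \<open>Step diagonally into the quadrant by less than every nonzero distance from p
    to the line of a side of a rectangle: the rectangle reached then covers the quadrant.\<close>
  define gaps where "gaps = insert e ((\<Union>(a, b, c, d)\<in>F. {\<bar>a - x\<bar>, \<bar>c - x\<bar>, \<bar>b - y\<bar>, \<bar>d - y\<bar>}) - {0})"
  define \<delta> where "\<delta> = Min gaps / 2"
  have "finite gaps" "gaps \<noteq> {}" "\<forall>z\<in>gaps. z > 0"
    unfolding gaps_def using fin e by auto
  then have \<delta>: "0 < \<delta>" "\<forall>z\<in>gaps. 2 * \<delta> \<le> z"
    unfolding \<delta>_def by auto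
  have "\<delta> < e" using \<delta> unfolding gaps_def by auto
  then have "(x + s * \<delta>, y + t * \<delta>) \<in> \<Union>(rect ` F)"
    using s t \<delta>(1) by (intro eP) auto
  then obtain a b c d where M: "(a, b, c, d) \<in> F" "(x + s * \<delta>, y + t * \<delta>) \<in> rect (a, b, c, d)"
    by auto
  have "z = 0 \<or> 2 * \<delta> \<le> z" if "z \<in> {\<bar>a - x\<bar>, \<bar>c - x\<bar>, \<bar>b - y\<bar>, \<bar>d - y\<bar>}" for z
    using \<delta>(2) M(1) that unfolding gaps_def by blast
  then have "\<bar>a - x\<bar> = 0 \<or> 2 * \<delta> \<le> \<bar>a - x\<bar>" "\<bar>c - x\<bar> = 0 \<or> 2 * \<delta> \<le> \<bar>c - x\<bar>"
    "\<bar>b - y\<bar> = 0 \<or> 2 * \<delta> \<le> \<bar>b - y\<bar>" "\<bar>d - y\<bar> = 0 \<or> 2 * \<delta> \<le> \<bar>d - y\<bar>"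
    by blast+
  then have "covers_quadrant (a, b, c, d) p s t"
    using M(2) p s t \<delta>(1) by (auto simp: abs_if split: if_splits)
  then show "\<exists>M\<in>F. covers_quadrant M p s t" using M(1) by blast
next
  assume "\<exists>M\<in>F. covers_quadrant M p s t"
  then show "quadrant_in (\<Union>(rect ` F)) p s t"
    using quadrant_in_if_covers_quadrant[OF _ _ s t] by blast
qed

section \<open>Tilings and the pieces of a vertical division\<close>

definition tiling :: "(real \<times> real) set \<Rightarrow> rcoords set \<Rightarrow> bool" where
  "tiling P F \<longleftrightarrow> finite F \<and> F \<noteq> {} \<and> (\<forall>M\<in>F. proper M) \<and> P = \<Union>(rect ` F) \<and>
     (\<forall>M\<in>F. \<forall>N\<in>F. overlap M N \<longrightarrow> M = N)"

text \<open>The horizontal sides of the tiles run along the boundary of P: no quadrant of P lies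
  directly beyond one of them.\<close>
definition horizontal_sides_on_boundary :: "(real \<times> real) set \<Rightarrow> rcoords set \<Rightarrow> bool" where
  "horizontal_sides_on_boundary P F \<longleftrightarrow>
     (\<forall>M\<in>F. \<forall>p s t. (s, t) \<in> signs \<and> covers_quadrant M p s t \<and> snd p = snd (vertex M s t) \<longrightarrow>
        \<not> quadrant_in P p s (-t))"

lemma horizontal_sides_on_boundaryD:
  assumes "horizontal_sides_on_boundary P F" "M \<in> F" "(s, t) \<in> signs"
    "covers_quadrant M p s t" "snd p = snd (vertex M s t)"
  shows "\<not> quadrant_in P p s (-t)"
  using assms unfolding horizontal_sides_on_boundary_def by blast

definition vertical_sides :: "rcoords set \<Rightarrow> (real \<times> real \<times> real) set" where
  "vertical_sides F = (\<lambda>(a, b, c, d). (a, b, d)) ` F \<union> (\<lambda>(a, b, c, d). (c, b, d)) ` F"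

lemma mem_vertical_sides:
  "(x, y0, y1) \<in> vertical_sides F \<longleftrightarrow> (\<exists>a c. (a, y0, c, y1) \<in> F \<and> (x = a \<or> x = c))"
  unfolding vertical_sides_def by force

lemma quadrants_in_tiling_iff:
  assumes "tiling P F"
  shows "(s, t) \<in> quadrants_in P p \<longleftrightarrow> (s, t) \<in> signs \<and> (\<exists>M\<in>F. covers_quadrant M p s t)"
  using assms quadrant_in_Union_rect_iff[of F s t p]
  unfolding quadrants_in_def tiling_def mem_signs by auto

lemma open_rect_disjoint_vertical_side:
  assumes F: "tiling P F" and M: "M \<in> F" and side: "(x, y0, y1) \<in> vertical_sides F"
  shows "open_rect M \<inter> vseg x y0 y1 = {}"
proof (rule ccontr)
  have proper: "\<forall>M\<in>F. proper M" and disj: "\<forall>M\<in>F. \<forall>N\<in>F. overlap M N \<longrightarrow> M = N"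
    using F by (auto simp: tiling_def)
  assume "open_rect M \<inter> vseg x y0 y1 \<noteq> {}"
  then obtain z where z: "z \<in> open_rect M" "z \<in> vseg x y0 y1" by blast
  obtain a c where N: "(a, y0, c, y1) \<in> F" "x = a \<or> x = c"
    using side unfolding mem_vertical_sides by blast
  then have "a < c" "y0 < y1" using proper by auto
  then have "overlap M (a, y0, c, y1)"
    using z N(2) by (cases M) (auto simp: mem_box_pair vseg_def)
  then have "M = (a, y0, c, y1)" using disj M N(1) by blast
  then show False
    using z N(2) by (auto simp: mem_box_pair vseg_def)
qed

lemma interior_minus_vertical_sides:
  assumes "tiling P F" "horizontal_sides_on_boundary P F"
  shows "interior P - (\<Union>(x, a, b)\<in>vertical_sides F. vseg x a b) = \<Union>(open_rect ` F)"
proof (intro equalityI subsetI)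
  have proper: "\<forall>M\<in>F. proper M" and P: "P = \<Union>(rect ` F)"
    using assms(1) by (auto simp: tiling_def)
  fix z assume z: "z \<in> interior P - (\<Union>(x, a, b)\<in>vertical_sides F. vseg x a b)"
  obtain x y where zxy: "z = (x, y)" by (cases z)
  obtain M where "M \<in> F" "z \<in> rect M"
    using z interior_subset P by blast
  moreover obtain a b c d where "M = (a, b, c, d)" by (cases M)
  ultimately have M: "(a, b, c, d) \<in> F" "z \<in> rect (a, b, c, d)" "a < c" "b < d"
    using proper by auto
  have "(a, b, d) \<in> vertical_sides F" "(c, b, d) \<in> vertical_sides F"
    using M(1) unfolding mem_vertical_sides by blast+
  then have "x \<noteq> a" "x \<noteq> c"
    using z M(2) zxy by (auto simp: vseg_def)
  have boundary: "\<not> quadrant_in P z 1 (-t)"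
    if "t \<in> {-1, 1}" "covers_quadrant (a, b, c, d) z 1 t" "y = (if t = 1 then b else d)" for t
    using horizontal_sides_on_boundaryD[OF assms(2) M(1), of 1 t z] zxy that
    by (cases "t = 1") (auto simp: mem_signs)
  have "quadrant_in P z 1 1" "quadrant_in P z 1 (-1)"
    using z by (auto intro: interior_imp_quadrant_in)
  then have "y \<noteq> d" "y \<noteq> b"
    using boundary[of "-1"] boundary[of 1] M zxy \<open>x \<noteq> a\<close> \<open>x \<noteq> c\<close> by auto
  then have "z \<in> open_rect (a, b, c, d)"
    using M zxy \<open>x \<noteq> a\<close> \<open>x \<noteq> c\<close> by (auto simp: mem_box_pair)
  then show "z \<in> \<Union>(open_rect ` F)" using M(1) by blast
next
  have P: "P = \<Union>(rect ` F)" using assms(1) by (simp add: tiling_def)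
  fix z assume "z \<in> \<Union>(open_rect ` F)"
  then obtain M where M: "M \<in> F" "z \<in> open_rect M" by blast
  have "open_rect M \<subseteq> interior P"
    unfolding interior_rect[symmetric] P using M(1) by (intro interior_mono) blast
  moreover have "z \<notin> vseg x y0 y1" if "(x, y0, y1) \<in> vertical_sides F" for x y0 y1
    using open_rect_disjoint_vertical_side[OF assms(1) M(1) that] M(2) by blast
  ultimately show "z \<in> interior P - (\<Union>(x, a, b)\<in>vertical_sides F. vseg x a b)"
    using M(2) by blast
qed

lemma pieces_vertical_sides:
  assumes "tiling P F" "horizontal_sides_on_boundary P F"
  shows "pieces P (vertical_sides F) = rect ` F"
proof -
  have proper: "\<forall>M\<in>F. proper M" and disj: "\<forall>M\<in>F. \<forall>N\<in>F. overlap M N \<longrightarrow> M = N"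
    using assms(1) by (auto simp: tiling_def)
  have "components (\<Union>(open_rect ` F)) = open_rect ` F"
  proof (rule components_open_unique)
    show "pairwise disjnt (open_rect ` F)"
    proof (rule pairwiseI)
      fix X Y assume "X \<in> open_rect ` F" "Y \<in> open_rect ` F" "X \<noteq> Y"
      then obtain M N where "M \<in> F" "N \<in> F" "X = open_rect M" "Y = open_rect N" "\<not> overlap M N"
        using disj by blast
      then show "disjnt X Y"
        by (cases M; cases N) (auto simp: disjnt_def mem_box_pair)
    qed
    show "open X \<and> connected X \<and> X \<noteq> {}" if X: "X \<in> open_rect ` F" for X
    proof -
      obtain M where "M \<in> F" "X = open_rect M" using X by blast
      then show ?thesis
        using proper open_rect_nonempty by (cases M) (auto intro: convex_connected)
    qed
  qed auto
  then have "pieces P (vertical_sides F) = (\<lambda>M. closure (open_rect M)) ` F"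
    unfolding pieces_def interior_minus_vertical_sides[OF assms] by (simp add: image_image)
  also have "\<dots> = rect ` F"
    using proper closure_open_rect by (intro image_cong) auto
  finally show ?thesis .
qed

lemma vertical_division_vertical_sides:
  assumes "tiling P F" "horizontal_sides_on_boundary P F"
  shows "vertical_division P (vertical_sides F)"
proof -
  have fin: "finite F" and proper: "\<forall>M\<in>F. proper M" and P: "P = \<Union>(rect ` F)"
    using assms(1) by (auto simp: tiling_def)
  have "a < b \<and> vseg x a b \<subseteq> P" if side: "(x, a, b) \<in> vertical_sides F" for x a b
  proof -
    obtain a' c' where M: "(a', a, c', b) \<in> F" "x = a' \<or> x = c'"
      using side unfolding mem_vertical_sides by blast
    then have "a' < c'" "a < b" using proper by auto
    then have "vseg x a b \<subseteq> rect (a', a, c', b)"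
      using M(2) by (auto simp: vseg_def)
    then show ?thesis using \<open>a < b\<close> M(1) unfolding P by blast
  qed
  moreover have "finite (vertical_sides F)"
    using fin unfolding vertical_sides_def by auto
  ultimately show ?thesis
    using fin proper is_rectangle_rect
    unfolding vertical_division_def pieces_vertical_sides[OF assms] by auto
qed

section \<open>Convex corners\<close>

lemma finite_lex_min:
  fixes K :: "('a::linorder \<times> 'b::linorder) set"
  assumes "finite K" "K \<noteq> {}"
  shows "\<exists>p\<in>K. \<forall>q\<in>K. fst p < fst q \<or> (fst p = fst q \<and> snd p \<le> snd q)"
proof -
  define m where "m = Min (fst ` K)"
  define K' where "K' = {q \<in> K. fst q = m}"
  have "m \<in> fst ` K" unfolding m_def using assms by simp
  then have "finite (snd ` K')" "snd ` K' \<noteq> {}" unfolding K'_def using assms(1) by auto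
  then have "Min (snd ` K') \<in> snd ` K'" by (rule Min_in)
  then obtain p where p: "p \<in> K'" "snd p = Min (snd ` K')" by auto
  have "fst p < fst q \<or> (fst p = fst q \<and> snd p \<le> snd q)" if q: "q \<in> K" for q
  proof (cases "fst q = m")
    case True
    then show ?thesis using p q assms(1) unfolding K'_def by auto
  next
    case False
    have "m \<le> fst q" unfolding m_def using assms(1) q by simp
    then show ?thesis using False p(1) unfolding K'_def by auto
  qed
  then show ?thesis using p(1) unfolding K'_def by blast
qed

text \<open>The vertex of a tile that is extreme in direction (-s, -t), first horizontally and then
  vertically, is a convex corner of P.\<close>
lemma extreme_vertex_quadrants:
  assumes P: "tiling P F" and st: "(s, t) \<in> signs"
  obtains p where "quadrants_in P p = {(s, t)}"
proof -
  have fin: "finite F" "F \<noteq> {}" and proper: "\<forall>M\<in>F. proper M"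
    using P by (auto simp: tiling_def)
  define key where "key M = (s * fst (vertex M s t), t * snd (vertex M s t))" for M
  have "finite (key ` F)" "key ` F \<noteq> {}" using fin by auto
  then have "\<exists>k\<in>key ` F. \<forall>q\<in>key ` F. fst k < fst q \<or> (fst k = fst q \<and> snd k \<le> snd q)"
    by (rule finite_lex_min)
  then obtain M where M: "M \<in> F"
    "\<And>N. N \<in> F \<Longrightarrow> fst (key M) < fst (key N) \<or> (fst (key M) = fst (key N) \<and> snd (key M) \<le> snd (key N))"
    by auto
  have unique: "(s', t') = (s, t)" if N: "N \<in> F" "covers_quadrant N (vertex M s t) s' t'" "(s', t') \<in> signs"
    for N s' t'
  proof -
    obtain a b c d where Md: "M = (a, b, c, d)" by (cases M)
    obtain a' b' c' d' where Nd: "N = (a', b', c', d')" by (cases N)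
    have "fst (key M) < fst (key N) \<or> (fst (key M) = fst (key N) \<and> snd (key M) \<le> snd (key N))"
      using M(2) N(1) by blast
    moreover have "s = 1 \<or> s = -1" "t = 1 \<or> t = -1" "s' = 1 \<or> s' = -1" "t' = 1 \<or> t' = -1"
      using st N(3) by (auto simp: mem_signs)
    ultimately show ?thesis
      using N(2) unfolding Md Nd key_def by (auto split: if_splits)
  qed
  have "quadrants_in P (vertex M s t) = {(s, t)}"
  proof (intro equalityI subsetI)
    fix st' assume "st' \<in> quadrants_in P (vertex M s t)"
    then show "st' \<in> {(s, t)}"
      using unique quadrants_in_tiling_iff[OF P] by (cases st') blast
  next
    fix st' assume "st' \<in> {(s, t)}"
    then show "st' \<in> quadrants_in P (vertex M s t)"
      using quadrants_in_tiling_iff[OF P] covers_quadrant_vertex[of M s t] M(1) proper st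
      by (auto simp: mem_signs)
  qed
  then show thesis using that by blast
qed

lemma four_convex_corners:
  assumes "tiling P F"
  obtains C where "card C = 4" "\<forall>q\<in>C. card (quadrants_in P q) = 1"
proof -
  have "\<forall>st\<in>signs. \<exists>p. quadrants_in P p = {st}"
  proof
    fix st assume "st \<in> signs"
    then obtain p where "quadrants_in P p = {st}"
      using extreme_vertex_quadrants[OF assms, of "fst st" "snd st"] by auto
    then show "\<exists>p. quadrants_in P p = {st}" by blast
  qed
  from bchoice[OF this] obtain pt where pt: "\<forall>st\<in>signs. quadrants_in P (pt st) = {st}"
    by blast
  have "inj_on pt signs"
  proof (rule inj_onI)
    fix x y assume xy: "x \<in> signs" "y \<in> signs" "pt x = pt y"
    have "{x} = quadrants_in P (pt x)" using pt xy(1) by simp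
    also have "\<dots> = {y}" using pt xy(2,3) by simp
    finally show "x = y" by simp
  qed
  then have "card (pt ` signs) = 4"
    using card_signs by (simp add: card_image)
  moreover have "\<forall>q\<in>pt ` signs. card (quadrants_in P q) = 1"
    using pt by auto
  ultimately show thesis using that by blast
qed

section \<open>Counting tile vertices against corners\<close>

lemma signs_eq: "(s, t) \<in> signs \<Longrightarrow> signs = {(s, t), (s, -t), (-s, t), (-s, -t)}"
  unfolding signs_def by auto

lemma card_disjoint_subsets_signs:
  assumes "A \<subseteq> signs" "B \<subseteq> signs" "A \<inter> B = {}"
  shows "card A + card B \<le> 4"
proof -
  have "finite A" "finite B" using assms finite_signs finite_subset by blast+
  then have "card A + card B = card (A \<union> B)" using assms(3) by (simp add: card_Un_disjoint)
  also have "\<dots> \<le> card signs" using assms(1,2) finite_signs by (intro card_mono) auto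
  finally show ?thesis by (simp add: card_signs)
qed

lemma vertex_not_covers_opposite:
  "proper M \<Longrightarrow> s \<in> {-1, 1} \<Longrightarrow> \<not> covers_quadrant M (vertex M s t) (-s) t'"
  by (cases M) auto

lemma vertex_if_covers_one_quadrant:
  assumes "s \<in> {-1, 1}" "t \<in> {-1, 1}" "covers_quadrant N p s t"
    "\<not> covers_quadrant N p (-s) t" "\<not> covers_quadrant N p s (-t)"
  shows "p = vertex N s t"
  using assms by (cases N; cases p) (auto split: if_splits)

lemma taller_neighbour_covers:
  assumes "proper K" "proper L" "s \<in> {-1, 1}" "t \<in> {-1, 1}" "vertex K s t = vertex L (-s) t"
    "t * snd (vertex K s (-t)) < t * snd (vertex L (-s) (-t))"
  shows "covers_quadrant L (vertex K s (-t)) (-s) t" "covers_quadrant L (vertex K s (-t)) (-s) (-t)"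
  using assms by (cases K; cases L; auto split: if_splits)+

fun vertex_of :: "rcoords \<times> real \<times> real \<Rightarrow> real \<times> real" where
  "vertex_of (M, s, t) = vertex M s t"

fun flip :: "rcoords \<times> real \<times> real \<Rightarrow> rcoords \<times> real \<times> real" where
  "flip (M, s, t) = (M, s, -t)"

lemma flip_flip [simp]: "flip (flip i) = i"
  by (cases i) simp

lemma flip_mem: "i \<in> F \<times> signs \<Longrightarrow> flip i \<in> F \<times> signs"
  by (cases i) (auto simp: signs_def)

definition no_horizontal_merge :: "rcoords set \<Rightarrow> bool" where
  "no_horizontal_merge F \<longleftrightarrow> (\<forall>a b c d e. (a, b, c, d) \<in> F \<longrightarrow> (c, b, e, d) \<notin> F)"

locale boundary_tiling =
  fixes P :: "(real \<times> real) set" and F :: "rcoords set"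
  assumes tiling: "tiling P F"
    and sides_on_boundary: "horizontal_sides_on_boundary P F"
    and no_merge: "no_horizontal_merge F"
    and no_pinch: "\<forall>p. quadrants_in P p \<noteq> {(1, 1), (-1, -1)} \<and> quadrants_in P p \<noteq> {(1, -1), (-1, 1)}"
begin

lemma finite_tiles: "finite F"
  using tiling by (simp add: tiling_def)

lemma proper_tile: "M \<in> F \<Longrightarrow> proper M"
  using tiling by (simp add: tiling_def)

lemma overlapping_tiles_eq: "M \<in> F \<Longrightarrow> N \<in> F \<Longrightarrow> overlap M N \<Longrightarrow> M = N"
  using tiling by (simp add: tiling_def)

lemma vertex_quadrant_in:
  assumes "M \<in> F" "(s, t) \<in> signs"
  shows "(s, t) \<in> quadrants_in P (vertex M s t)"
proof -
  have "covers_quadrant M (vertex M s t) s t"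
    using covers_quadrant_vertex proper_tile assms by (simp add: mem_signs)
  then show ?thesis using quadrants_in_tiling_iff[OF tiling] assms by blast
qed

lemma flipped_quadrant_not_in:
  assumes "M \<in> F" "(s, t) \<in> signs"
  shows "(s, -t) \<notin> quadrants_in P (vertex M s t)"
  using horizontal_sides_on_boundaryD[OF sides_on_boundary assms, of "vertex M s t"]
    covers_quadrant_vertex proper_tile assms by (auto simp: quadrants_in_def mem_signs)

definition incidences :: "real \<times> real \<Rightarrow> (rcoords \<times> real \<times> real) set" where
  "incidences p = {i \<in> F \<times> signs. vertex_of i = p}"

lemma finite_incidences: "finite (incidences p)"
proof -
  have "incidences p \<subseteq> F \<times> signs" unfolding incidences_def by auto
  then show ?thesis using finite_tiles finite_signs finite_subset by blast
qed

lemma inj_on_snd_incidences: "inj_on snd (incidences p)"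
proof (rule inj_onI)
  fix i j assume ij: "i \<in> incidences p" "j \<in> incidences p" "snd i = snd j"
  obtain M s t N where "i = (M, s, t)" "j = (N, s, t)" "M \<in> F" "N \<in> F" "(s, t) \<in> signs"
    "vertex M s t = p" "vertex N s t = p"
    using ij unfolding incidences_def by auto
  moreover from this have "overlap M N"
    using covers_quadrant_overlap covers_quadrant_vertex proper_tile by (metis mem_signs)
  ultimately show "i = j" using overlapping_tiles_eq by blast
qed

lemma card_incidences_le: "card (incidences p) \<le> card (quadrants_in P p)"
proof -
  have "snd ` incidences p \<subseteq> quadrants_in P p"
    using vertex_quadrant_in unfolding incidences_def by auto
  then show ?thesis
    using card_inj_on_le[OF inj_on_snd_incidences _ finite_quadrants_in] by blast
qed

text \<open>Every incidence at p rules out the flipped quadrant at p.\<close>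
lemma card_quadrants_plus_incidences: "card (quadrants_in P p) + card (incidences p) \<le> 4"
proof -
  let ?flip = "\<lambda>(s::real, t::real). (s, -t)"
  have "inj_on (?flip \<circ> snd) (incidences p)"
    using inj_on_snd_incidences by (rule comp_inj_on) (auto intro: inj_onI)
  then have "card ((?flip \<circ> snd) ` incidences p) = card (incidences p)"
    by (rule card_image)
  moreover have "(?flip \<circ> snd) ` incidences p \<subseteq> signs"
    unfolding incidences_def signs_def by auto
  moreover have "quadrants_in P p \<inter> (?flip \<circ> snd) ` incidences p = {}"
    using flipped_quadrant_not_in unfolding incidences_def by auto
  ultimately show ?thesis
    using card_disjoint_subsets_signs[OF quadrants_in_subset_signs] by metis
qed

lemma card_incidences_corner: "p \<in> corners P \<Longrightarrow> card (incidences p) \<le> 1"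
  using card_incidences_le[of p] card_quadrants_plus_incidences[of p] unfolding corners_def by auto

lemma card_incidences_non_corner: "p \<notin> corners P \<Longrightarrow> card (incidences p) \<le> 2"
  using card_incidences_le[of p] card_quadrants_plus_incidences[of p] unfolding corners_def by auto

lemma quadrants_at_non_corner_vertex:
  assumes M: "M \<in> F" and st: "(s, t) \<in> signs" and p: "vertex M s t \<notin> corners P"
  shows "quadrants_in P (vertex M s t) = {(s, t), (-s, t)}"
proof -
  let ?Q = "quadrants_in P (vertex M s t)"
  have "(M, s, t) \<in> incidences (vertex M s t)"
    using M st unfolding incidences_def by simp
  then have "card (incidences (vertex M s t)) > 0"
    using finite_incidences card_gt_0_iff by blast
  then have card_Q: "card ?Q = 2"
    using card_incidences_le[of "vertex M s t"] card_quadrants_plus_incidences[of "vertex M s t"] p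
    unfolding corners_def by auto
  have pair: "card {(s, t), (-s, t')} = 2" for t'
    using st unfolding mem_signs by auto
  have in_Q: "(s, t) \<in> ?Q" and not_flipped: "(s, -t) \<notin> ?Q"
    using vertex_quadrant_in flipped_quadrant_not_in M st by blast+
  have "(-s, -t) \<notin> ?Q"
  proof
    assume "(-s, -t) \<in> ?Q"
    then have "?Q = {(s, t), (-s, -t)}"
      using in_Q card_Q pair card_subset_eq[OF finite_quadrants_in] by (metis empty_subsetI insert_subset)
    moreover have "{(s, t), (-s, -t)} = {(1, 1), (-1, -1)} \<or> {(s, t), (-s, -t)} = {(1, -1), (-1, 1)}"
      using st unfolding mem_signs by auto
    ultimately show False using no_pinch by metis
  qed
  then have "?Q \<subseteq> {(s, t), (-s, t)}"
    using quadrants_in_subset_signs signs_eq[OF st] not_flipped by blast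
  then show ?thesis
    using card_Q pair by (intro card_seteq) auto
qed

lemma neighbour_tile:
  assumes M: "M \<in> F" and st: "(s, t) \<in> signs" and p: "vertex M s t \<notin> corners P"
  obtains N where "N \<in> F" "vertex N (-s) t = vertex M s t"
proof -
  let ?p = "vertex M s t"
  have pm: "s \<in> {-1, 1}" "t \<in> {-1, 1}" using st unfolding mem_signs by auto
  have Q: "quadrants_in P ?p = {(s, t), (-s, t)}"
    using quadrants_at_non_corner_vertex[OF assms] .
  then obtain N where N: "N \<in> F" "covers_quadrant N ?p (-s) t"
    using quadrants_in_tiling_iff[OF tiling] by blast
  have "\<not> covers_quadrant N ?p s t"
  proof
    assume "covers_quadrant N ?p s t"
    then have "overlap M N"
      using covers_quadrant_overlap[OF covers_quadrant_vertex[OF proper_tile[OF M] pm] _ pm] by blast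
    then have "M = N" using overlapping_tiles_eq M N(1) by blast
    then show False
      using N(2) vertex_not_covers_opposite[OF proper_tile[OF M] pm(1)] by blast
  qed
  moreover have "\<not> covers_quadrant N ?p (-s) (-t)"
  proof
    assume "covers_quadrant N ?p (-s) (-t)"
    moreover have "(-s, -t) \<in> signs" using st unfolding signs_def by auto
    ultimately have "(-s, -t) \<in> quadrants_in P ?p"
      using quadrants_in_tiling_iff[OF tiling] N(1) by blast
    then have "(-s, -t) \<in> {(s, t), (-s, t)}" using Q by simp
    moreover have "t \<noteq> -t" using pm by auto
    ultimately show False by auto
  qed
  ultimately have "?p = vertex N (-s) t"
    using vertex_if_covers_one_quadrant[of "-s" t N ?p] N(2) st by (auto simp: mem_signs)
  then show thesis using that N(1) by simp
qed

lemma neighbour_heights_differ: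
  assumes M: "M \<in> F" and N: "N \<in> F" and st: "(s, t) \<in> signs"
    and MN: "vertex M s t = vertex N (-s) t"
  shows "snd (vertex M s (-t)) \<noteq> snd (vertex N (-s) (-t))"
proof -
  obtain a b c d a' b' c' d' where Md: "M = (a, b, c, d)" and Nd: "N = (a', b', c', d')"
    by (cases M; cases N)
  have "(a', b', c', d') \<in> F \<Longrightarrow> (c', b', c, d') \<notin> F" "(a, b, c, d) \<in> F \<Longrightarrow> (c, b, c', d) \<notin> F"
    using no_merge unfolding no_horizontal_merge_def by blast+
  moreover have "s = 1 \<or> s = -1" "t = 1 \<or> t = -1" using st unfolding mem_signs by auto
  ultimately show ?thesis
    using M N MN unfolding Md Nd by (auto split: if_splits)
qed

text \<open>At the far end of the shorter of two neighbouring tiles the taller one continues on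
  both sides of the shared vertical line, while the shorter one ends there.\<close>
lemma reflex_vertex_of_shorter_neighbour:
  assumes K: "K \<in> F" and L: "L \<in> F" and st: "(s, t) \<in> signs"
    and KL: "vertex K s t = vertex L (-s) t"
    and shorter: "t * snd (vertex K s (-t)) < t * snd (vertex L (-s) (-t))"
  shows "card (quadrants_in P (vertex K s (-t))) = 3"
proof -
  let ?q = "vertex K s (-t)"
  have st': "(s, -t) \<in> signs" "(-s, t) \<in> signs" "(-s, -t) \<in> signs"
    using st unfolding signs_def by auto
  have "covers_quadrant L ?q (-s) t" "covers_quadrant L ?q (-s) (-t)"
    using taller_neighbour_covers[OF proper_tile[OF K] proper_tile[OF L] _ _ KL shorter] st
    by (auto simp: mem_signs)
  then have "{(s, -t), (-s, t), (-s, -t)} \<subseteq> quadrants_in P ?q"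
    using vertex_quadrant_in[OF K st'(1)] quadrants_in_tiling_iff[OF tiling] L st' by blast
  moreover have "(s, t) \<notin> quadrants_in P ?q"
    using flipped_quadrant_not_in[OF K st'(1)] by simp
  ultimately have "quadrants_in P ?q = signs - {(s, t)}"
    using quadrants_in_subset_signs signs_eq[OF st] by blast
  then show ?thesis
    using st by (simp add: card_signs finite_signs card_Diff_singleton)
qed

lemma reflex_corner_of_non_corner_vertex:
  assumes M: "M \<in> F" and st: "(s, t) \<in> signs" and p: "vertex M s t \<notin> corners P"
  shows "\<exists>i\<in>incidences (vertex M s t). card (quadrants_in P (vertex_of (flip i))) = 3"
proof -
  obtain N where N: "N \<in> F" "vertex N (-s) t = vertex M s t"
    using neighbour_tile[OF assms] .
  have st': "(-s, t) \<in> signs" using st unfolding signs_def by auto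
  have M_inc: "(M, s, t) \<in> incidences (vertex M s t)" and N_inc: "(N, -s, t) \<in> incidences (vertex M s t)"
    using M N st st' unfolding incidences_def by auto
  have "snd (vertex M s (-t)) \<noteq> snd (vertex N (-s) (-t))"
    using neighbour_heights_differ[OF M N(1) st] N(2) by simp
  then have "t * snd (vertex M s (-t)) < t * snd (vertex N (-s) (-t)) \<or>
      t * snd (vertex N (-s) (-t)) < t * snd (vertex M (- (-s)) (-t))"
    using st unfolding mem_signs by auto
  then show ?thesis
  proof
    assume "t * snd (vertex M s (-t)) < t * snd (vertex N (-s) (-t))"
    then have "card (quadrants_in P (vertex_of (flip (M, s, t)))) = 3"
      using reflex_vertex_of_shorter_neighbour[OF M N(1) st] N(2) by simp
    then show ?thesis using M_inc by blast
  next
    assume "t * snd (vertex N (-s) (-t)) < t * snd (vertex M (- (-s)) (-t))"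
    then have "card (quadrants_in P (vertex_of (flip (N, -s, t)))) = 3"
      using reflex_vertex_of_shorter_neighbour[OF N(1) M st'] N(2) by simp
    then show ?thesis using N_inc by blast
  qed
qed

definition vertices :: "(real \<times> real) set" where
  "vertices = vertex_of ` (F \<times> signs)"

lemma finite_vertices: "finite vertices"
  unfolding vertices_def using finite_tiles finite_signs by simp

lemma sum_card_incidences: "4 * card F = (\<Sum>p\<in>vertices. card (incidences p))"
proof -
  have "4 * card F = card (F \<times> signs)"
    using finite_tiles by (simp add: card_cartesian_product card_signs)
  also have "\<dots> = (\<Sum>i\<in>F \<times> signs. 1)"
    by simp
  also have "\<dots> = (\<Sum>p\<in>vertices. \<Sum>i\<in>incidences p. 1)"
    unfolding vertices_def incidences_def
    by (rule sum.image_gen) (simp add: finite_tiles finite_signs)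
  also have "\<dots> = (\<Sum>p\<in>vertices. card (incidences p))"
    by simp
  finally show ?thesis .
qed

lemma reflex_corners_of_non_corner_vertices:
  obtains reflex where "inj_on reflex (vertices - corners P)"
    "\<And>p. p \<in> vertices - corners P \<Longrightarrow> card (quadrants_in P (reflex p)) = 3"
proof -
  let ?T = "vertices - corners P"
  have "\<forall>p\<in>?T. \<exists>i. i \<in> incidences p \<and> card (quadrants_in P (vertex_of (flip i))) = 3"
  proof
    fix p assume "p \<in> ?T"
    then obtain M s t where "M \<in> F" "(s, t) \<in> signs" "p = vertex M s t" "p \<notin> corners P"
      unfolding vertices_def by auto
    then have "\<exists>i\<in>incidences p. card (quadrants_in P (vertex_of (flip i))) = 3"
      using reflex_corner_of_non_corner_vertex[of M s t] by simp
    then show "\<exists>i. i \<in> incidences p \<and> card (quadrants_in P (vertex_of (flip i))) = 3"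
      by blast
  qed
  from bchoice[OF this] obtain inc where inc: "\<forall>p\<in>?T. inc p \<in> incidences p \<and>
      card (quadrants_in P (vertex_of (flip (inc p)))) = 3"
    by blast
  define reflex where "reflex p = vertex_of (flip (inc p))" for p
  have reflex_corner: "card (quadrants_in P (reflex p)) = 3" if "p \<in> ?T" for p
    using inc that unfolding reflex_def by blast
  have "inj_on reflex ?T"
  proof (rule inj_onI)
    fix p1 p2 assume p: "p1 \<in> ?T" "p2 \<in> ?T" "reflex p1 = reflex p2"
    have "flip (inc p1) \<in> incidences (reflex p1)" "flip (inc p2) \<in> incidences (reflex p1)"
      using inc p flip_mem unfolding incidences_def reflex_def by auto
    moreover have "reflex p1 \<in> corners P"
      using reflex_corner[OF p(1)] unfolding corners_def by simp
    ultimately have "flip (inc p1) = flip (inc p2)"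
      using card_incidences_corner card_le_Suc0_iff_eq[OF finite_incidences] by auto
    then have "inc p1 = inc p2"
      by (metis flip_flip)
    moreover have "vertex_of (inc p1) = p1" "vertex_of (inc p2) = p2"
      using inc p(1,2) unfolding incidences_def by auto
    ultimately show "p1 = p2" by metis
  qed
  then show thesis using that reflex_corner by blast
qed

lemma card_non_corner_vertices:
  assumes "finite (corners P)"
  shows "card (vertices - corners P) + 4 \<le> card (corners P)"
proof -
  let ?T = "vertices - corners P"
  obtain reflex where reflex: "inj_on reflex ?T" "\<And>p. p \<in> ?T \<Longrightarrow> card (quadrants_in P (reflex p)) = 3"
    using reflex_corners_of_non_corner_vertices by blast
  obtain C where C: "card C = 4" "\<forall>q\<in>C. card (quadrants_in P q) = 1"
    using four_convex_corners[OF tiling] .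
  have "finite C" using C(1) by (intro card_ge_0_finite) simp
  have disj: "reflex ` ?T \<inter> C = {}"
    using reflex(2) C(2) by fastforce
  have sub: "reflex ` ?T \<union> C \<subseteq> corners P"
    using reflex(2) C(2) unfolding corners_def by auto
  have "finite (reflex ` ?T)" using finite_vertices by simp
  then have "card (reflex ` ?T) + card C = card (reflex ` ?T \<union> C)"
    using card_Un_disjoint[OF _ \<open>finite C\<close> disj] by simp
  also have "\<dots> \<le> card (corners P)"
    using card_mono[OF assms sub] .
  finally show ?thesis
    using C(1) card_image[OF reflex(1)] by linarith
qed

lemma card_tiles_le_corners:
  assumes "finite (corners P)"
  shows "4 * card F + 8 \<le> 3 * card (corners P)"
proof -
  let ?T = "vertices - corners P"
  have "4 * card F = (\<Sum>p\<in>vertices \<inter> corners P. card (incidences p)) + (\<Sum>p\<in>?T. card (incidences p))"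
    unfolding sum_card_incidences using finite_vertices by (rule sum.Int_Diff)
  also have "\<dots> \<le> (\<Sum>p\<in>vertices \<inter> corners P. 1) + (\<Sum>p\<in>?T. 2)"
    using card_incidences_corner card_incidences_non_corner by (intro add_mono sum_mono) auto
  also have "\<dots> \<le> card (corners P) + 2 * card ?T"
    using assms by (simp add: card_mono)
  finally show ?thesis
    using card_non_corner_vertices[OF assms] by linarith
qed

end

section \<open>Existence of a suitable tiling\<close>

definition integral_coords :: "rcoords set \<Rightarrow> bool" where
  "integral_coords F \<longleftrightarrow> (\<forall>a b c d. (a, b, c, d) \<in> F \<longrightarrow> a \<in> \<int> \<and> b \<in> \<int> \<and> c \<in> \<int> \<and> d \<in> \<int>)"

definition consecutive :: "real set \<Rightarrow> real \<Rightarrow> real \<Rightarrow> bool" where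
  "consecutive X a c \<longleftrightarrow> a \<in> X \<and> c \<in> X \<and> a < c \<and> (\<forall>z\<in>X. \<not> (a < z \<and> z < c))"

definition column_aligned :: "real set \<Rightarrow> rcoords set \<Rightarrow> bool" where
  "column_aligned X F \<longleftrightarrow> (\<forall>a b c d. (a, b, c, d) \<in> F \<longrightarrow> consecutive X a c)"

lemma consecutive_overlap_eq:
  assumes "consecutive X a c" "consecutive X a' c'" "a < c'" "a' < c"
  shows "a = a' \<and> c = c'"
  using assms unfolding consecutive_def by (meson linorder_neqE_linordered_idom)

lemma consecutive_around:
  assumes X: "finite X" and "a \<in> X" "c \<in> X" "a < c" "a \<le> u" "u \<le> c"
  obtains x1 x2 where "consecutive X x1 x2" "a \<le> x1" "x1 \<le> u" "u \<le> x2" "x2 \<le> c"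
proof -
  define B where "B = {z \<in> X. u \<le> z \<and> a < z}"
  have "finite B" "c \<in> B" unfolding B_def using X assms by auto
  then have "Min B \<in> B" "\<And>z. z \<in> B \<Longrightarrow> Min B \<le> z"
    using Min_in[of B] Min_le[of B] by blast+
  define x2 where "x2 = Min B"
  have x2: "x2 \<in> X" "u \<le> x2" "a < x2" "\<And>z. z \<in> X \<Longrightarrow> u \<le> z \<Longrightarrow> a < z \<Longrightarrow> x2 \<le> z"
    using \<open>Min B \<in> B\<close> \<open>\<And>z. z \<in> B \<Longrightarrow> Min B \<le> z\<close> unfolding x2_def B_def by auto
  define A where "A = {z \<in> X. z < x2}"
  have "finite A" "a \<in> A" unfolding A_def using X assms x2(3) by auto
  then have "Max A \<in> A" "\<And>z. z \<in> A \<Longrightarrow> z \<le> Max A"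
    using Max_in[of A] Max_ge[of A] by blast+
  define x1 where "x1 = Max A"
  have x1: "x1 \<in> X" "x1 < x2" "a \<le> x1" "\<And>z. z \<in> X \<Longrightarrow> z < x2 \<Longrightarrow> z \<le> x1"
    using \<open>Max A \<in> A\<close> \<open>\<And>z. z \<in> A \<Longrightarrow> z \<le> Max A\<close> \<open>a \<in> A\<close> unfolding x1_def A_def by auto
  have "x1 \<le> u"
  proof (rule ccontr)
    assume "\<not> x1 \<le> u"
    then have "x2 \<le> x1" using x1(1) x2(4)[of x1] assms(5) by simp
    then show False using x1(2) by simp
  qed
  moreover have "consecutive X x1 x2"
    using x1 x2 unfolding consecutive_def by force
  moreover have "x2 \<le> c" using x2(4) assms by simp
  ultimately show thesis using that x1(3) x2(2) by blast
qed

definition x_coords :: "rcoords set \<Rightarrow> real set" where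
  "x_coords R = (\<lambda>(a, b, c, d). a) ` R \<union> (\<lambda>(a, b, c, d). c) ` R"

definition y_coords :: "rcoords set \<Rightarrow> real set" where
  "y_coords R = (\<lambda>(a, b, c, d). b) ` R \<union> (\<lambda>(a, b, c, d). d) ` R"

definition grid_tiles :: "rcoords set \<Rightarrow> rcoords set" where
  "grid_tiles R = {(a, b, c, d). consecutive (x_coords R) a c \<and> consecutive (y_coords R) b d \<and>
     (\<exists>M\<in>R. rect (a, b, c, d) \<subseteq> rect M)}"

lemma Union_rect_grid_tiles:
  assumes R: "finite R" "\<forall>M\<in>R. proper M"
  shows "\<Union>(rect ` grid_tiles R) = \<Union>(rect ` R)"
proof (intro equalityI subsetI)
  fix z assume "z \<in> \<Union>(rect ` grid_tiles R)"
  then show "z \<in> \<Union>(rect ` R)" unfolding grid_tiles_def by blast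
next
  define X Y where "X = x_coords R" and "Y = y_coords R"
  have XY: "finite X" "finite Y"
    using R(1) unfolding X_def Y_def x_coords_def y_coords_def by auto
  fix z assume "z \<in> \<Union>(rect ` R)"
  then obtain a b c d where M: "(a, b, c, d) \<in> R" "z \<in> rect (a, b, c, d)" by auto
  obtain u v where z: "z = (u, v)" by (cases z)
  have "a \<in> X" "c \<in> X" "b \<in> Y" "d \<in> Y"
    unfolding X_def Y_def x_coords_def y_coords_def using M(1) by force+
  moreover have "a \<le> u" "u \<le> c" "b \<le> v" "v \<le> d" "a < c" "b < d" using M z R(2) by auto
  ultimately obtain x1 x2 y1 y2 where
    "consecutive X x1 x2" "a \<le> x1" "x1 \<le> u" "u \<le> x2" "x2 \<le> c"
    "consecutive Y y1 y2" "b \<le> y1" "y1 \<le> v" "v \<le> y2" "y2 \<le> d"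
    using consecutive_around[OF XY(1)] consecutive_around[OF XY(2)] by metis
  moreover from this have "rect (x1, y1, x2, y2) \<subseteq> rect (a, b, c, d)" by auto
  ultimately have "(x1, y1, x2, y2) \<in> grid_tiles R" "z \<in> rect (x1, y1, x2, y2)"
    using M(1) z unfolding grid_tiles_def X_def Y_def by (auto simp del: rect.simps simp: mem_rect)
  then show "z \<in> \<Union>(rect ` grid_tiles R)" by blast
qed

lemma grid_tiling:
  assumes R: "finite R" "R \<noteq> {}" "\<forall>M\<in>R. proper M" and P: "P = \<Union>(rect ` R)"
  shows "tiling P (grid_tiles R)" "column_aligned (x_coords R) (grid_tiles R)"
    "integral_coords R \<Longrightarrow> integral_coords (grid_tiles R)"
proof -
  define X Y G where "X = x_coords R" and "Y = y_coords R" and "G = grid_tiles R"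
  have X: "X = (\<lambda>(a, b, c, d). a) ` R \<union> (\<lambda>(a, b, c, d). c) ` R"
    and Y: "Y = (\<lambda>(a, b, c, d). b) ` R \<union> (\<lambda>(a, b, c, d). d) ` R"
    unfolding X_def Y_def x_coords_def y_coords_def by simp_all
  have G: "G = {(a, b, c, d). consecutive X a c \<and> consecutive Y b d \<and> (\<exists>M\<in>R. rect (a, b, c, d) \<subseteq> rect M)}"
    unfolding G_def X_def Y_def grid_tiles_def ..
  have XY: "finite X" "finite Y" using R(1) unfolding X Y by auto
  have G_sub: "G \<subseteq> X \<times> Y \<times> X \<times> Y" unfolding G consecutive_def by auto
  have "\<Union>(rect ` G) = P"
    using Union_rect_grid_tiles[OF R(1,3)] P unfolding G_def by simp
  moreover have "G \<noteq> {}" using calculation R(2,3) P by fastforce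
  moreover have "\<forall>M\<in>G. proper M" unfolding G consecutive_def by auto
  moreover have "M = N" if "M \<in> G" "N \<in> G" "overlap M N" for M N
    using that consecutive_overlap_eq unfolding G by (cases M; cases N) auto
  ultimately show "tiling P (grid_tiles R)"
    using finite_subset[OF G_sub] XY unfolding tiling_def G_def[symmetric] by auto
  show "column_aligned (x_coords R) (grid_tiles R)"
    unfolding column_aligned_def X_def[symmetric] G_def[symmetric] G by auto
  assume "integral_coords R"
  then have "X \<subseteq> \<int>" "Y \<subseteq> \<int>" unfolding integral_coords_def X Y by auto
  then show "integral_coords (grid_tiles R)"
    using G_sub unfolding integral_coords_def G_def[symmetric] by auto
qed

lemma column_aligned_insert:
  "column_aligned X F \<Longrightarrow> consecutive X a c \<Longrightarrow> column_aligned X (insert (a, b, c, d) (F - Y))"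
  unfolding column_aligned_def by blast

lemma tiling_merge:
  assumes F: "tiling P F" and M1: "M1 \<in> F" and M2: "M2 \<in> F" and "M1 \<noteq> M2"
    and M: "proper M" "rect M = rect M1 \<union> rect M2" "overlap M M1"
    and overlap_M: "\<And>N. proper N \<Longrightarrow> overlap N M \<Longrightarrow> overlap N M1 \<or> overlap N M2"
  shows "tiling P (insert M (F - {M1, M2}))" "card (insert M (F - {M1, M2})) < card F"
proof -
  have fin: "finite F" and proper: "\<forall>N\<in>F. proper N" and P: "P = \<Union>(rect ` F)"
    and disj: "\<forall>N\<in>F. \<forall>N'\<in>F. overlap N N' \<longrightarrow> N = N'"
    using F by (auto simp: tiling_def)
  let ?F = "insert M (F - {M1, M2})"
  have union: "P = \<Union>(rect ` ?F)"
    using M(2) M1 M2 unfolding P by blast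
  have disj': "N = N'" if N: "N \<in> ?F" "N' \<in> ?F" "overlap N N'" for N N'
  proof -
    have no_overlap: "\<not> overlap K M" if K: "K \<in> F - {M1, M2}" for K
    proof
      assume "overlap K M"
      then have "overlap K M1 \<or> overlap K M2" using overlap_M proper K by blast
      then show False using disj K M1 M2 by blast
    qed
    then have "\<not> overlap M K" if "K \<in> F - {M1, M2}" for K
      using that overlap_sym by blast
    then show ?thesis
      using N disj no_overlap by (cases "N = M"; cases "N' = M") auto
  qed
  show "tiling P ?F"
    unfolding tiling_def using fin proper M(1) union disj' by blast
  have "M \<notin> F - {M1, M2}"
  proof
    assume "M \<in> F - {M1, M2}"
    then have "M = M1" using disj M1 M(3) by blast
    then show False using \<open>M \<in> F - {M1, M2}\<close> by blast
  qed
  then have "card ?F = card F - 2 + 1"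
    using fin M1 M2 \<open>M1 \<noteq> M2\<close> by (simp add: card_Diff_subset)
  moreover have "card {M1, M2} \<le> card F"
    using fin M1 M2 by (intro card_mono) auto
  ultimately show "card ?F < card F"
    using \<open>M1 \<noteq> M2\<close> by simp
qed

lemma tiling_merge_vertical:
  assumes "tiling P F" "(a, b, c, d) \<in> F" "(a, d, c, e) \<in> F"
  shows "tiling P (insert (a, b, c, e) (F - {(a, b, c, d), (a, d, c, e)}))"
    "card (insert (a, b, c, e) (F - {(a, b, c, d), (a, d, c, e)})) < card F"
proof -
  have lt: "a < c" "b < d" "d < e" using assms unfolding tiling_def by auto
  have "rect (a, b, c, e) = rect (a, b, c, d) \<union> rect (a, d, c, e)"
    using lt by (auto simp del: rect.simps simp: mem_rect)
  moreover have "proper N \<Longrightarrow> overlap N (a, b, c, e) \<Longrightarrow> overlap N (a, b, c, d) \<or> overlap N (a, d, c, e)" for N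
    by (cases N) auto
  moreover have "(a, b, c, d) \<noteq> (a, d, c, e)" "proper (a, b, c, e)" "overlap (a, b, c, e) (a, b, c, d)"
    using lt by auto
  ultimately show "tiling P (insert (a, b, c, e) (F - {(a, b, c, d), (a, d, c, e)}))"
    "card (insert (a, b, c, e) (F - {(a, b, c, d), (a, d, c, e)})) < card F"
    using tiling_merge[OF assms] by blast+
qed

lemma tiling_merge_horizontal:
  assumes "tiling P F" "(a, b, c, d) \<in> F" "(c, b, e, d) \<in> F"
  shows "tiling P (insert (a, b, e, d) (F - {(a, b, c, d), (c, b, e, d)}))"
    "card (insert (a, b, e, d) (F - {(a, b, c, d), (c, b, e, d)})) < card F"
proof -
  have lt: "a < c" "b < d" "c < e" using assms unfolding tiling_def by auto
  have "rect (a, b, e, d) = rect (a, b, c, d) \<union> rect (c, b, e, d)"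
    using lt by (auto simp del: rect.simps simp: mem_rect)
  moreover have "proper N \<Longrightarrow> overlap N (a, b, e, d) \<Longrightarrow> overlap N (a, b, c, d) \<or> overlap N (c, b, e, d)" for N
    by (cases N) auto
  moreover have "(a, b, c, d) \<noteq> (c, b, e, d)" "proper (a, b, e, d)" "overlap (a, b, e, d) (a, b, c, d)"
    using lt by auto
  ultimately show "tiling P (insert (a, b, e, d) (F - {(a, b, c, d), (c, b, e, d)}))"
    "card (insert (a, b, e, d) (F - {(a, b, c, d), (c, b, e, d)})) < card F"
    using tiling_merge[OF assms] by blast+
qed

lemma integral_coords_merge:
  assumes "integral_coords F" "(a, b, c, d) \<in> F" "(a', b', c', d') \<in> F"
  shows "integral_coords (insert (a, b, c', d') (F - X))"
  using assms unfolding integral_coords_def by blast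

definition no_vertical_merge :: "rcoords set \<Rightarrow> bool" where
  "no_vertical_merge F \<longleftrightarrow> (\<forall>a b c d e. (a, b, c, d) \<in> F \<longrightarrow> (a, d, c, e) \<notin> F)"

text \<open>A tile of a column-aligned tiling can only be continued across a horizontal side by a tile
  of the same column, which could be merged with it.\<close>
lemma horizontal_sides_on_boundary_if_column_aligned:
  assumes F: "tiling P F" and col: "column_aligned X F" and no_merge: "no_vertical_merge F"
  shows "horizontal_sides_on_boundary P F"
  unfolding horizontal_sides_on_boundary_def
proof (intro ballI allI impI notI)
  fix M p s t
  assume M: "M \<in> F" and Mp: "(s, t) \<in> signs \<and> covers_quadrant M p s t \<and> snd p = snd (vertex M s t)"
    and "quadrant_in P p s (-t)"
  have fin: "finite F" and proper: "\<forall>N\<in>F. proper N" and P: "P = \<Union>(rect ` F)"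
    and disj: "\<forall>N\<in>F. \<forall>N'\<in>F. overlap N N' \<longrightarrow> N = N'"
    using F by (auto simp: tiling_def)
  have pm: "s = 1 \<or> s = -1" "t = 1 \<or> t = -1" using Mp unfolding mem_signs by auto
  then obtain N where N: "N \<in> F" "covers_quadrant N p s (-t)"
    using \<open>quadrant_in P p s (-t)\<close> quadrant_in_Union_rect_iff[OF fin, of s "-t" p] P by auto
  obtain a b c d a' b' c' d' x y where
    Md: "M = (a, b, c, d)" and Nd: "N = (a', b', c', d')" and p: "p = (x, y)"
    by (cases M; cases N; cases p)
  have "consecutive X a c" "consecutive X a' c'"
    using col M N(1) unfolding column_aligned_def Md Nd by blast+
  moreover have "a < c'" "a' < c"
    using Mp N(2) pm proper M N(1) unfolding Md Nd p by (auto split: if_splits)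
  ultimately have same_column: "a' = a" "c' = c"
    using consecutive_overlap_eq by blast+
  have "\<not> overlap M N"
  proof
    assume "overlap M N"
    then have "M = N" using disj M N(1) by blast
    then show False using Mp N(2) pm unfolding Md p by (auto split: if_splits)
  qed
  then have "N = (a, b', c, b) \<or> N = (a, d, c, d')"
    using Mp N(2) pm proper M same_column unfolding Md Nd p by (auto split: if_splits)
  then show False
    using no_merge M N(1) unfolding no_vertical_merge_def Md by blast
qed

lemma covers_quadrant_merge_horizontal:
  assumes "covers_quadrant (a, b, e, d) p s t" "s \<in> {-1, 1}"
  shows "covers_quadrant (a, b, c, d) p s t \<or> covers_quadrant (c, b, e, d) p s t"
  using assms by (cases p) (auto split: if_splits)

lemma horizontal_sides_on_boundary_merge:
  assumes sides: "horizontal_sides_on_boundary P F"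
    and M1: "(a, b, c, d) \<in> F" and M2: "(c, b, e, d) \<in> F"
  shows "horizontal_sides_on_boundary P (insert (a, b, e, d) (F - {(a, b, c, d), (c, b, e, d)}))"
  unfolding horizontal_sides_on_boundary_def
proof (intro ballI allI impI)
  fix M p s t
  assume M: "M \<in> insert (a, b, e, d) (F - {(a, b, c, d), (c, b, e, d)})"
    and Mp: "(s, t) \<in> signs \<and> covers_quadrant M p s t \<and> snd p = snd (vertex M s t)"
  show "\<not> quadrant_in P p s (- t)"
  proof (cases "M = (a, b, e, d)")
    case True
    then have "covers_quadrant (a, b, c, d) p s t \<or> covers_quadrant (c, b, e, d) p s t"
      using Mp covers_quadrant_merge_horizontal unfolding mem_signs by blast
    moreover have "snd (vertex (a, b, c, d) s t) = snd (vertex M s t)"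
      "snd (vertex (c, b, e, d) s t) = snd (vertex M s t)"
      using True by auto
    ultimately show ?thesis
      using horizontal_sides_on_boundaryD[OF sides M1] horizontal_sides_on_boundaryD[OF sides M2] Mp
      by metis
  next
    case False
    then show ?thesis
      using horizontal_sides_on_boundaryD[OF sides] M Mp by blast
  qed
qed

lemma orthogonal_polygon_rectangles:
  assumes "orthogonal_polygon P"
  obtains R where "finite R" "R \<noteq> {}" "\<forall>M\<in>R. proper M" "P = \<Union>(rect ` R)"
    "is_polyomino P \<Longrightarrow> integral_coords R"
proof -
  obtain \<R> where \<R>: "finite \<R>" "\<R> \<noteq> {}" "\<forall>R\<in>\<R>. is_rectangle R" "P = \<Union>\<R>"
    using assms unfolding orthogonal_polygon_def by blast
  have "\<forall>R\<in>\<R>. \<exists>M. proper M \<and> R = rect M"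
    using \<R>(3) unfolding is_rectangle_def by force
  then obtain coords where coords: "\<forall>R\<in>\<R>. proper (coords R) \<and> R = rect (coords R)"
    by metis
  have P_coords: "P = \<Union>(rect ` coords ` \<R>)"
    using coords \<R>(4) by auto
  have "P \<noteq> {}"
  proof -
    obtain R0 where "R0 \<in> \<R>" using \<R>(2) by blast
    then have "rect (coords R0) \<noteq> {}" "rect (coords R0) \<subseteq> P"
      using coords rect_nonempty P_coords by blast+
    then show ?thesis by blast
  qed
  show thesis
  proof (cases "is_polyomino P")
    case False
    then show thesis
      using that[of "coords ` \<R>"] \<R>(1,2) coords P_coords by blast
  next
    case True
    then obtain C where C: "finite C" "P = (\<Union>(i, j)\<in>C. cell i j)"
      unfolding is_polyomino_def by blast
    define R where "R = (\<lambda>(i, j). (real_of_int i, real_of_int j, real_of_int i + 1, real_of_int j + 1)) ` C"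
    have "P = \<Union>(rect ` R)"
      unfolding R_def C(2) by (auto simp: cell_def)
    moreover have "R \<noteq> {}"
      using \<open>P \<noteq> {}\<close> calculation by auto
    moreover have "finite R" "\<forall>M\<in>R. proper M" "integral_coords R"
      using C(1) unfolding R_def integral_coords_def by auto
    ultimately show thesis using that by blast
  qed
qed

lemma exists_tiling_sides_on_boundary:
  assumes "orthogonal_polygon P"
  obtains F where "tiling P F" "horizontal_sides_on_boundary P F"
    "is_polyomino P \<Longrightarrow> integral_coords F"
proof -
  obtain R where R: "finite R" "R \<noteq> {}" "\<forall>M\<in>R. proper M" "P = \<Union>(rect ` R)"
    "is_polyomino P \<Longrightarrow> integral_coords R"
    using orthogonal_polygon_rectangles[OF assms] by blast
  define X where "X = x_coords R"
  define column_tiling where "column_tiling F \<longleftrightarrow>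
    tiling P F \<and> column_aligned X F \<and> (is_polyomino P \<longrightarrow> integral_coords F)" for F
  have "column_tiling (grid_tiles R)"
    using grid_tiling[OF R(1-4)] R(5) unfolding column_tiling_def X_def by blast
  then obtain F where F: "column_tiling F" "\<And>F'. column_tiling F' \<Longrightarrow> card F \<le> card F'"
    using ex_has_least_nat[of column_tiling _ card] by metis
  have "no_vertical_merge F"
    unfolding no_vertical_merge_def
  proof (intro allI impI notI)
    fix a b c d e assume M1: "(a, b, c, d) \<in> F" and M2: "(a, d, c, e) \<in> F"
    have "consecutive X a c"
      using F(1) M1 unfolding column_tiling_def column_aligned_def by blast
    then have "column_tiling (insert (a, b, c, e) (F - {(a, b, c, d), (a, d, c, e)}))"
      using F(1) tiling_merge_vertical(1)[OF _ M1 M2] column_aligned_insert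
        integral_coords_merge[OF _ M1 M2]
      unfolding column_tiling_def by blast
    then show False
      using F tiling_merge_vertical(2)[OF _ M1 M2] unfolding column_tiling_def by fastforce
  qed
  then show thesis
    using that F(1) horizontal_sides_on_boundary_if_column_aligned
    unfolding column_tiling_def by blast
qed

lemma exists_boundary_tiling:
  assumes "orthogonal_polygon P"
  obtains F where "tiling P F" "horizontal_sides_on_boundary P F" "no_horizontal_merge F"
    "is_polyomino P \<Longrightarrow> integral_coords F"
proof -
  define admissible where "admissible F \<longleftrightarrow>
    tiling P F \<and> horizontal_sides_on_boundary P F \<and> (is_polyomino P \<longrightarrow> integral_coords F)" for F
  have "\<exists>F. admissible F"
    using exists_tiling_sides_on_boundary[OF assms] unfolding admissible_def by metis
  then obtain F where F: "admissible F" "\<And>F'. admissible F' \<Longrightarrow> card F \<le> card F'"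
    using ex_has_least_nat[of admissible _ card] by metis
  have "no_horizontal_merge F"
    unfolding no_horizontal_merge_def
  proof (intro allI impI notI)
    fix a b c d e assume M1: "(a, b, c, d) \<in> F" and M2: "(c, b, e, d) \<in> F"
    have "admissible (insert (a, b, e, d) (F - {(a, b, c, d), (c, b, e, d)}))"
      using F(1) tiling_merge_horizontal(1)[OF _ M1 M2] horizontal_sides_on_boundary_merge[OF _ M1 M2]
        integral_coords_merge[OF _ M1 M2]
      unfolding admissible_def by blast
    then show False
      using F tiling_merge_horizontal(2)[OF _ M1 M2] unfolding admissible_def by fastforce
  qed
  then show thesis
    using that F(1) unfolding admissible_def by blast
qed

lemma unit_interval_cover:
  fixes x :: real
  assumes "of_int i0 \<le> x" "x \<le> of_int i1" "i0 < i1"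
  obtains i where "i0 \<le> i" "i < i1" "of_int i \<le> x" "x \<le> of_int i + 1"
proof (cases "x < of_int i1")
  case True
  have "i0 \<le> \<lfloor>x\<rfloor>" "\<lfloor>x\<rfloor> < i1"
    using assms(1) True by (simp_all add: le_floor_iff floor_less_iff)
  then show thesis using that[of "\<lfloor>x\<rfloor>"] by linarith
next
  case False
  then show thesis using that[of "i1 - 1"] assms by simp
qed

lemma is_polyomino_rect:
  assumes "a \<in> \<int>" "b \<in> \<int>" "c \<in> \<int>" "d \<in> \<int>" "a < c" "b < d"
  shows "is_polyomino (rect (a, b, c, d))"
proof -
  obtain i0 j0 i1 j1 where ij: "a = of_int i0" "b = of_int j0" "c = of_int i1" "d = of_int j1"
    using assms(1-4) Ints_cases by metis
  then have lt: "i0 < i1" "j0 < j1" using assms(5,6) by auto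
  define C where "C = {i0..<i1} \<times> {j0..<j1}"
  have "rect (a, b, c, d) = (\<Union>(i, j)\<in>C. cell i j)"
  proof (intro equalityI subsetI)
    fix z assume "z \<in> rect (a, b, c, d)"
    moreover obtain x y where z: "z = (x, y)" by (cases z)
    ultimately have xy: "of_int i0 \<le> x" "x \<le> of_int i1" "of_int j0 \<le> y" "y \<le> of_int j1"
      using ij by auto
    obtain i where "i0 \<le> i" "i < i1" "of_int i \<le> x" "x \<le> of_int i + 1"
      by (rule unit_interval_cover[OF xy(1,2) lt(1)])
    moreover obtain j where "j0 \<le> j" "j < j1" "of_int j \<le> y" "y \<le> of_int j + 1"
      by (rule unit_interval_cover[OF xy(3,4) lt(2)])
    ultimately have "(i, j) \<in> C" "z \<in> cell i j"
      unfolding C_def cell_def z by auto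
    then show "z \<in> (\<Union>(i, j)\<in>C. cell i j)" by blast
  next
    fix z assume "z \<in> (\<Union>(i, j)\<in>C. cell i j)"
    then obtain i j where "i0 \<le> i" "i < i1" "j0 \<le> j" "j < j1" "z \<in> cell i j"
      unfolding C_def by auto
    moreover from this have "real_of_int i0 \<le> of_int i" "real_of_int i + 1 \<le> of_int i1"
      "real_of_int j0 \<le> of_int j" "real_of_int j + 1 \<le> of_int j1"
      by linarith+
    ultimately show "z \<in> rect (a, b, c, d)"
      unfolding cell_def ij by (cases z) auto
  qed
  moreover have "finite C" unfolding C_def by simp
  ultimately show ?thesis unfolding is_polyomino_def by blast
qed

theorem corollary1:
  fixes P :: "(real \<times> real) set" and n :: nat
  assumes "orthogonal_polygon P"
    and "finite (corners P)" and "card (corners P) = n"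
  shows "\<exists>S. vertical_division P S \<and> real (card (pieces P S)) \<le> 3 / 4 * real n - 2 \<and>
             (is_polyomino P \<longrightarrow> (\<forall>R\<in>pieces P S. is_polyomino R))"
proof -
  obtain F where F: "tiling P F" "horizontal_sides_on_boundary P F" "no_horizontal_merge F"
    "is_polyomino P \<Longrightarrow> integral_coords F"
    using exists_boundary_tiling[OF assms(1)] by blast
  interpret boundary_tiling P F
    using F(1-3) assms(1) unfolding orthogonal_polygon_def by unfold_locales blast+
  have pieces: "pieces P (vertical_sides F) = rect ` F"
    using pieces_vertical_sides[OF F(1,2)] .
  have "card (pieces P (vertical_sides F)) = card F"
    unfolding pieces using rect_inj proper_tile by (intro card_image inj_onI) auto
  moreover have "4 * card F + 8 \<le> 3 * n"
    using card_tiles_le_corners assms(2,3) by simp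
  ultimately have "real (card (pieces P (vertical_sides F))) \<le> 3 / 4 * real n - 2"
    by linarith
  moreover have "is_polyomino R" if "is_polyomino P" "R \<in> pieces P (vertical_sides F)" for R
    using that F(4) proper_tile is_polyomino_rect unfolding pieces integral_coords_def by force
  ultimately show ?thesis
    using vertical_division_vertical_sides[OF F(1,2)] by blast
qed

end
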